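(* Let $D$ be a reduced knot diagram, let $2\le k<\infty$, and fix a version of the $k$-color region select game on $D$ and a checkerboard shading of $D$. Let $r_1$ be a shaded region and $r_2$ an unshaded region. (i) If $k=2^t$ for some integer $t\ge1$, then every color configuration has a unique solving pattern in which $r_1$ and $r_2$ are not pushed. (ii) If $k$ is not a power of $2$, let $p$ be the smallest odd prime factor of $k$. If $d(r_1,r_2)<p$, then every color configuration has a unique solving pattern in which $r_1$ and $r_2$ are not pushed.
   Context: Diagrams: a link (knot) diagram $D$ is the underlying graph of a regular projection of a link (knot) into $S^2$. Its vertices are the crossings, each of valence 4, and over/under information is ignored. Components without crossings are closed loops, each regarded as one edge with no vertices. Regions of $D$ are the connected components of $S^2\setminus D$. A vertex or edge is incident to a region if it lies in the boundary of that region. Two regions are adjacent if they are incident to a common edge. A vertex $v$ is reducible if some circle in $S^2$ meets $D$ transversely only at $v$, and irreducible otherwise. An irreducible vertex is incident to four distinct regions. A reducible vertex $v$ is incident to exactly three regions $r_0,r_1,r_2$, where $r_0$ touches $v$ from two sides and $r_1,r_2$ touch it from one side. A knot diagram with $n$ vertices has $n+2$ regions. A knot diagram is reduced if all its vertices are irreducible. Ring: for an integer $k\ge2$ let $\mathbb{Z}_k=\mathbb{Z}/k\mathbb{Z}$, and for $k=\infty$ let $\mathbb{Z}_\infty=\mathbb{Z}$. Game versions: a version of the $k$-color region select game on $D$ is a choice of an increment number $a(v,r)\in\mathbb{Z}_k$ for every incident vertex–region pair, subject to the following rules. - If $k<\infty$ and $v$ is irreducible, then $a(v,r)=a_v$ is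 the same for all regions $r$ incident to $v$, and $a_v$ is not a zero divisor of $\mathbb{Z}_k$. - If $k<\infty$ and $v$ is reducible, then $a(v,r_0)$ is arbitrary, while $a(v,r_1)$ and $a(v,r_2)$ are not zero divisors. - If $k=\infty$, then $a(v,r)=1$, except that $a(v,r_0)\in\mathbb{Z}$ is arbitrary when $v$ is reducible. - The original game is the version in which all increment numbers equal $1$. Game matrix: enumerate the vertices as $v_1,\dots,v_n$ and the regions as $r_1,\dots,r_m$. The game matrix is the $n\times m$ matrix $M$ over $\mathbb{Z}_k$ with $M_{ij}=a(v_i,r_j)$ if $v_i$ is incident to $r_j$, and $M_{ij}=0$ otherwise. Patterns and configurations: a push pattern is a vector $\mathbf p\in\mathbb{Z}_k^m$, and $\mathbf p(r_j)=p_j$ is the number of times $r_j$ is pushed. A region $r$ is not pushed in $\mathbf p$ if $\mathbf p(r)=0$. A color configuration is a vector $\mathbf c\in\mathbb{Z}_k^n$. Applying $\mathbf p$ to $\mathbf c$ yields $\mathbf c+M\mathbf p$. The configuration $\mathbf c$ is solvable if some $\mathbf p$ satisfies $M\mathbf p=-\mathbf c$; such a $\mathbf p$ is a solving pattern for $\mathbf c$. $D$ is always solvable in the version if every $\mathbf c\in\mathbb{Z}_k^n$ is solvable. A null pattern is an element of $Ker_k(M)=\{\mathbf p\in\mathbb{Z}_k^m: M\mathbf p=0\}$. Checkerboard shading: a checkerboard shading of $D$ is a shading of some of its regions such that, of any two adjacent regions, exactly one is shaded. Distance: the dual graph of $D$ has one vertex per region, with an edge between the vertices of each pair of adjacent regions.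 The distance $d(r_1,r_2)$ is the graph distance between the corresponding vertices of the dual graph. *)

theory Defs
  imports "HOL-Computational_Algebra.Primes" "HOL-Number_Theory.Cong"
begin

text \<open>Combinatorial encoding of a diagram on S^2 by a combinatorial map:
  a finite set H of darts (half-edges), a fixed-point-free involution al
  (the two halves of an edge) and a permutation sg (cyclic order of the four
  half-edges around a crossing).\<close>

definition orb :: "('d \<Rightarrow> 'd) \<Rightarrow> 'd \<Rightarrow> 'd set" where
  "orb f d = range (\<lambda>n. (f ^^ n) d)"

definition vertices :: "'d set \<Rightarrow> ('d \<Rightarrow> 'd) \<Rightarrow> 'd set set" where
  "vertices H sg = (\<lambda>d. orb sg d) ` H"

definition edges :: "'d set \<Rightarrow> ('d \<Rightarrow> 'd) \<Rightarrow> 'd set set" where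
  "edges H al = (\<lambda>d. {d, al d}) ` H"

definition regions :: "'d set \<Rightarrow> ('d \<Rightarrow> 'd) \<Rightarrow> ('d \<Rightarrow> 'd) \<Rightarrow> 'd set set" where
  "regions H al sg = (\<lambda>d. orb (sg \<circ> al) d) ` H"

text \<open>straight-ahead successor: leave along the edge, continue on the opposite half-edge\<close>
definition straight :: "('d \<Rightarrow> 'd) \<Rightarrow> ('d \<Rightarrow> 'd) \<Rightarrow> 'd \<Rightarrow> 'd" where
  "straight al sg = sg \<circ> sg \<circ> al"

text \<open>A knot diagram with at least one crossing: connected 4-regular map of genus 0
  (Euler characteristic 2) whose straight-ahead walks form a single closed curve
  (two straight-ahead orbits = the two orientations of one component).\<close>
definition knot_diagram :: "'d set \<Rightarrow> ('d \<Rightarrow> 'd) \<Rightarrow> ('d \<Rightarrow> 'd) \<Rightarrow> bool" where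
  "knot_diagram H al sg \<longleftrightarrow>
     finite H \<and> H \<noteq> {} \<and>
     bij_betw sg H H \<and>
     (\<forall>d\<in>H. al d \<in> H \<and> al d \<noteq> d \<and> al (al d) = d) \<and>
     (\<forall>d\<in>H. card (orb sg d) = 4) \<and>
     (\<forall>d\<in>H. \<forall>e\<in>H. (d, e) \<in> ({(x, al x) | x. x \<in> H} \<union> {(x, sg x) | x. x \<in> H})\<^sup>*) \<and>
     int (card (vertices H sg)) - int (card (edges H al)) + int (card (regions H al sg)) = 2 \<and>
     card ((\<lambda>d. orb (straight al sg) d) ` H) = 2"

definition incident :: "'d set \<Rightarrow> 'd set \<Rightarrow> bool" where
  "incident v r \<longleftrightarrow> v \<inter> r \<noteq> {}"

definition irreducible_vertex :: "'d set \<Rightarrow> ('d \<Rightarrow> 'd) \<Rightarrow> ('d \<Rightarrow> 'd) \<Rightarrow> 'd set \<Rightarrow> bool" where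
  "irreducible_vertex H al sg v \<longleftrightarrow> card {r \<in> regions H al sg. incident v r} = 4"

definition reduced :: "'d set \<Rightarrow> ('d \<Rightarrow> 'd) \<Rightarrow> ('d \<Rightarrow> 'd) \<Rightarrow> bool" where
  "reduced H al sg \<longleftrightarrow> (\<forall>v \<in> vertices H sg. irreducible_vertex H al sg v)"

text \<open>Z_k represented by int modulo k\<close>
definition non_zero_divisor :: "nat \<Rightarrow> int \<Rightarrow> bool" where
  "non_zero_divisor k x \<longleftrightarrow> (\<forall>y. [x * y = 0] (mod int k) \<longrightarrow> [y = 0] (mod int k))"

definition game_version :: "'d set \<Rightarrow> ('d \<Rightarrow> 'd) \<Rightarrow> ('d \<Rightarrow> 'd) \<Rightarrow> nat \<Rightarrow> ('d set \<Rightarrow> 'd set \<Rightarrow> int) \<Rightarrow> bool" where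
  "game_version H al sg k a \<longleftrightarrow>
     (\<forall>v \<in> vertices H sg.
        (irreducible_vertex H al sg v \<longrightarrow>
           (\<exists>c. non_zero_divisor k c \<and>
                (\<forall>r \<in> regions H al sg. incident v r \<longrightarrow> [a v r = c] (mod int k)))) \<and>
        (\<not> irreducible_vertex H al sg v \<longrightarrow>
           (\<forall>r \<in> regions H al sg. incident v r \<and> card (v \<inter> r) = 1 \<longrightarrow> non_zero_divisor k (a v r))))"

definition game_matrix :: "('d set \<Rightarrow> 'd set \<Rightarrow> int) \<Rightarrow> 'd set \<Rightarrow> 'd set \<Rightarrow> int" where
  "game_matrix a v r = (if incident v r then a v r else 0)"

definition solving_pattern :: "'d set \<Rightarrow> ('d \<Rightarrow> 'd) \<Rightarrow> ('d \<Rightarrow> 'd) \<Rightarrow> nat \<Rightarrow> ('d set \<Rightarrow> 'd set \<Rightarrow> int)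
      \<Rightarrow> ('d set \<Rightarrow> int) \<Rightarrow> ('d set \<Rightarrow> int) \<Rightarrow> bool" where
  "solving_pattern H al sg k a c p \<longleftrightarrow>
     (\<forall>v \<in> vertices H sg.
        [c v + (\<Sum>r \<in> regions H al sg. game_matrix a v r * p r) = 0] (mod int k))"

definition unique_solving_fixing :: "'d set \<Rightarrow> ('d \<Rightarrow> 'd) \<Rightarrow> ('d \<Rightarrow> 'd) \<Rightarrow> nat \<Rightarrow> ('d set \<Rightarrow> 'd set \<Rightarrow> int)
      \<Rightarrow> 'd set \<Rightarrow> 'd set \<Rightarrow> bool" where
  "unique_solving_fixing H al sg k a r1 r2 \<longleftrightarrow>
     (\<forall>c. (\<exists>p. solving_pattern H al sg k a c p \<and> [p r1 = 0] (mod int k) \<and> [p r2 = 0] (mod int k)) \<and>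
          (\<forall>p q. solving_pattern H al sg k a c p \<and> [p r1 = 0] (mod int k) \<and> [p r2 = 0] (mod int k) \<and>
                 solving_pattern H al sg k a c q \<and> [q r1 = 0] (mod int k) \<and> [q r2 = 0] (mod int k)
                 \<longrightarrow> (\<forall>r \<in> regions H al sg. [p r = q r] (mod int k))))"

definition edge_incident :: "'d set \<Rightarrow> 'd set \<Rightarrow> bool" where
  "edge_incident e r \<longleftrightarrow> e \<inter> r \<noteq> {}"

definition adjacent :: "'d set \<Rightarrow> ('d \<Rightarrow> 'd) \<Rightarrow> 'd set \<Rightarrow> 'd set \<Rightarrow> bool" where
  "adjacent H al r r' \<longleftrightarrow> r \<noteq> r' \<and> (\<exists>e \<in> edges H al. edge_incident e r \<and> edge_incident e r')"

definition checkerboard :: "'d set \<Rightarrow> ('d \<Rightarrow> 'd) \<Rightarrow> ('d \<Rightarrow> 'd) \<Rightarrow> 'd set set \<Rightarrow> bool" where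
  "checkerboard H al sg S \<longleftrightarrow> S \<subseteq> regions H al sg \<and>
     (\<forall>r \<in> regions H al sg. \<forall>r' \<in> regions H al sg.
        adjacent H al r r' \<longrightarrow> (r \<in> S \<longleftrightarrow> r' \<notin> S))"

definition dual_dist :: "'d set \<Rightarrow> ('d \<Rightarrow> 'd) \<Rightarrow> ('d \<Rightarrow> 'd) \<Rightarrow> 'd set \<Rightarrow> 'd set \<Rightarrow> nat" where
  "dual_dist H al sg r r' = (LEAST n. \<exists>ps. length ps = Suc n \<and> hd ps = r \<and> last ps = r' \<and>
      set ps \<subseteq> regions H al sg \<and> (\<forall>i < n. adjacent H al (ps ! i) (ps ! Suc i)))"

end

theory Submission
  imports Defs "HOL-Library.FuncSet"
begin

text \<open>
  Let \<open>w\<close> be a null pattern modulo \<open>k\<close> that vanishes on \<open>r\<^sub>1\<close> and \<open>r\<^sub>2\<close>. Multiply it by the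
  sign \<open>\<plusminus>1\<close> of the checkerboard shading and call \<open>J x\<close> the jump of the result across the edge
  of the dart \<open>x\<close>. The shadings alternate around a crossing, so the vertex equation (the
  increment there being a non-zero divisor) says that the jumps across opposite edges cancel.
  Hence \<open>J\<close> is invariant under the straight-ahead walk, and as a knot diagram is a single closed
  curve, \<open>J \<equiv> \<plusminus>\<beta>\<close> for one \<open>\<beta>\<close>. A shortest dual path from \<open>r\<^sub>1\<close> to \<open>r\<^sub>2\<close> has odd length
  \<open>d\<close>, the two regions being shaded differently, so summing jumps along it gives \<open>m \<beta> \<equiv> 0\<close> with
  \<open>m\<close> odd and \<open>\<bar>m\<bar> \<le> d\<close>. When every odd number up to \<open>d\<close> is prime to \<open>k\<close> (as it is if \<open>k\<close> is a
  power of 2 or \<open>d\<close> is below the least odd prime factor of \<open>k\<close>) this forces \<open>\<beta> \<equiv> 0\<close>; then all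
  jumps vanish and \<open>w \<equiv> 0\<close>. Finally a reduced knot diagram with \<open>n\<close> crossings has \<open>n + 2\<close>
  regions, so the game matrix without the columns of \<open>r\<^sub>1\<close> and \<open>r\<^sub>2\<close> is square, and a square
  system over \<open>\<int>/k\<close> with trivial kernel is uniquely solvable.
\<close>

section \<open>Orbits\<close>

lemma orb_self: "d \<in> orb f d"
  unfolding orb_def by (metis funpow_0 rangeI)

lemma funpow_in_orb: "(f ^^ n) d \<in> orb f d"
  unfolding orb_def by blast

lemma orb_subset:
  assumes "x \<in> orb f d"
  shows "orb f x \<subseteq> orb f d"
proof
  fix y assume "y \<in> orb f x"
  then obtain i j where "x = (f ^^ i) d" "y = (f ^^ j) x"
    using assms unfolding orb_def by blast
  then have "y = (f ^^ (j + i)) d" by (simp add: funpow_add)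
  then show "y \<in> orb f d" by (simp add: funpow_in_orb)
qed

lemma funpow_closed: "bij_betw f H H \<Longrightarrow> d \<in> H \<Longrightarrow> (f ^^ n) d \<in> H"
  by (meson bij_betwE bij_betw_funpow)

lemma orb_closed: "bij_betw f H H \<Longrightarrow> d \<in> H \<Longrightarrow> orb f d \<subseteq> H"
  unfolding orb_def using funpow_closed[of f H d] by auto

lemma orb_eq_funpow_image:
  assumes "0 < n" "(f ^^ n) d = d"
  shows "orb f d = (\<lambda>i. (f ^^ i) d) ` {..<n}"
proof (intro equalityI subsetI)
  fix x assume "x \<in> orb f d"
  then obtain m where "x = (f ^^ m) d" unfolding orb_def by blast
  then have "x = (f ^^ (m mod n)) d" using funpow_mod_eq[OF assms(2)] by simp
  moreover have "m mod n < n" using assms(1) by simp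
  ultimately show "x \<in> (\<lambda>i. (f ^^ i) d) ` {..<n}" by blast
qed (auto simp: funpow_in_orb)

lemma card_orb_le_period:
  assumes "0 < n" "(f ^^ n) d = d"
  shows "card (orb f d) \<le> n"
  unfolding orb_eq_funpow_image[OF assms] using card_image_le[of "{..<n}"] by simp

lemma funpow_card_orb:
  assumes fin: "finite H" and bij: "bij_betw f H H" and d: "d \<in> H"
  shows "(f ^^ card (orb f d)) d = d"
proof -
  let ?c = "card (orb f d)"
  have "\<not> inj_on (\<lambda>i. (f ^^ i) d) {..?c}"
  proof
    assume "inj_on (\<lambda>i. (f ^^ i) d) {..?c}"
    then have "card ((\<lambda>i. (f ^^ i) d) ` {..?c}) = Suc ?c" by (simp add: card_image)
    moreover have "card ((\<lambda>i. (f ^^ i) d) ` {..?c}) \<le> ?c"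
    proof (rule card_mono)
      show "finite (orb f d)" using orb_closed[OF bij d] fin by (rule finite_subset)
    qed (auto intro: funpow_in_orb)
    ultimately show False by simp
  qed
  then obtain i j where "i \<le> ?c" "j \<le> ?c" "i \<noteq> j" "(f ^^ i) d = (f ^^ j) d"
    unfolding inj_on_def by auto
  then obtain i j where ij: "i < j" "j \<le> ?c" "(f ^^ i) d = (f ^^ j) d"
    by (cases "i < j") (auto simp: not_less_iff_gr_or_eq)
  have "(f ^^ j) d = (f ^^ (i + (j - i))) d" using ij(1) by simp
  also have "\<dots> = (f ^^ i) ((f ^^ (j - i)) d)" by (simp only: funpow_add o_apply)
  finally have "(f ^^ i) ((f ^^ (j - i)) d) = (f ^^ i) d" using ij(3) by simp
  moreover have "inj_on (f ^^ i) H" using bij_betw_funpow[OF bij] bij_betw_imp_inj_on by blast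
  ultimately have period: "(f ^^ (j - i)) d = d"
    using d funpow_closed[OF bij d] inj_onD[of "f ^^ i" H] by blast
  then have "?c \<le> j - i" using card_orb_le_period[OF _ period] ij(1) by simp
  with ij(2) have "j - i = ?c" by linarith
  with period show ?thesis by simp
qed

lemma orb_eq:
  assumes "finite H" "bij_betw f H H" "d \<in> H" "x \<in> orb f d"
  shows "orb f x = orb f d"
proof
  show "orb f x \<subseteq> orb f d" using orb_subset[OF assms(4)] .
  let ?c = "card (orb f d)"
  obtain i where x: "x = (f ^^ i) d" using assms(4) unfolding orb_def by blast
  have "finite (orb f d)" using orb_closed[OF assms(2,3)] assms(1) by (rule finite_subset)
  then have "0 < ?c" using orb_self[of d f] by (auto simp: card_gt_0_iff)
  then have exponent: "(?c - 1) * i + i = i * ?c" by (simp add: algebra_simps)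
  have "(f ^^ ((?c - 1) * i)) x = (f ^^ ((?c - 1) * i + i)) d"
    unfolding x funpow_add by simp
  also have "\<dots> = (f ^^ (i * ?c)) d" by (simp only: exponent)
  also have "\<dots> = d" using funpow_mod_eq[OF funpow_card_orb[OF assms(1-3)], of "i * ?c"] by simp
  finally have "d \<in> orb f x" using funpow_in_orb[where f=f and n="(?c - 1) * i" and d=x] by simp
  then show "orb f d \<subseteq> orb f x" by (rule orb_subset)
qed

lemma card_eq_mult_card_orbits:
  assumes fin: "finite H" and bij: "bij_betw f H H" and n: "\<And>d. d \<in> H \<Longrightarrow> card (orb f d) = n"
  shows "card H = n * card ((\<lambda>d. orb f d) ` H)"
proof -
  let ?O = "(\<lambda>d. orb f d) ` H"
  have "\<Union>?O = H"
  proof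
    show "\<Union>?O \<subseteq> H" using orb_closed[OF bij] by auto
    show "H \<subseteq> \<Union>?O" using orb_self[where f = f] by auto
  qed
  moreover have "pairwise disjnt ?O"
  proof (rule pairwiseI)
    fix A B assume "A \<in> ?O" "B \<in> ?O" "A \<noteq> B"
    then obtain x y where "x \<in> H" "A = orb f x" "y \<in> H" "B = orb f y" by blast
    then have "orb f z = A" "orb f z = B" if "z \<in> A" "z \<in> B" for z
      using that orb_eq[OF fin bij, of x z] orb_eq[OF fin bij, of y z] by simp_all
    then show "disjnt A B" using \<open>A \<noteq> B\<close> unfolding disjnt_def by blast
  qed
  moreover have "finite A" if "A \<in> ?O" for A
  proof -
    obtain d where "d \<in> H" "A = orb f d" using \<open>A \<in> ?O\<close> by blast
    then show ?thesis using finite_subset[OF orb_closed[OF bij] fin] by simp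
  qed
  ultimately have "card H = sum card ?O" using card_Union_disjoint[of ?O] by simp
  also have "\<dots> = sum (\<lambda>_. n) ?O" by (rule sum.cong) (auto simp: n)
  finally show ?thesis by simp
qed

section \<open>Square systems of congruences\<close>

lemma inj_on_residues_if_trivial_kernel:
  fixes M :: "'v \<Rightarrow> 'r \<Rightarrow> int" and K :: int
  assumes kernel: "\<And>w. \<forall>v\<in>V. K dvd (\<Sum>r\<in>R. M v r * w r) \<Longrightarrow> \<forall>r\<in>R. K dvd w r"
  shows "inj_on (\<lambda>w. restrict (\<lambda>v. (\<Sum>r\<in>R. M v r * w r) mod K) V) (\<Pi>\<^sub>E r\<in>R. {0..<K})"
proof (rule inj_onI)
  fix w w' assume w: "w \<in> (\<Pi>\<^sub>E r\<in>R. {0..<K})" and w': "w' \<in> (\<Pi>\<^sub>E r\<in>R. {0..<K})"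
    and eq: "restrict (\<lambda>v. (\<Sum>r\<in>R. M v r * w r) mod K) V =
      restrict (\<lambda>v. (\<Sum>r\<in>R. M v r * w' r) mod K) V"
  have "K dvd (\<Sum>r\<in>R. M v r * (w r - w' r))" if v: "v \<in> V" for v
  proof -
    have "(\<Sum>r\<in>R. M v r * w r) mod K = (\<Sum>r\<in>R. M v r * w' r) mod K"
      using fun_cong[OF eq, of v] v by simp
    then have "K dvd (\<Sum>r\<in>R. M v r * w r) - (\<Sum>r\<in>R. M v r * w' r)"
      by (simp add: mod_eq_dvd_iff)
    moreover have "(\<Sum>r\<in>R. M v r * (w r - w' r)) =
        (\<Sum>r\<in>R. M v r * w r) - (\<Sum>r\<in>R. M v r * w' r)"
      by (simp add: right_diff_distrib sum_subtractf)
    ultimately show ?thesis by simp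
  qed
  then have dvd: "\<forall>r\<in>R. K dvd w r - w' r" using kernel[of "\<lambda>r. w r - w' r"] by blast
  show "w = w'"
  proof (rule PiE_ext[OF w w'])
    fix r assume r: "r \<in> R"
    then have "w r mod K = w' r mod K" using dvd by (simp add: mod_eq_dvd_iff)
    moreover have "w r \<in> {0..<K}" "w' r \<in> {0..<K}" using w w' r by auto
    ultimately show "w r = w' r" by simp
  qed
qed

text \<open>On the canonical residues \<open>{0..<K}\<close> an injective square system is a bijection.\<close>
lemma solvable_mod_if_trivial_kernel:
  fixes M :: "'v \<Rightarrow> 'r \<Rightarrow> int" and K :: int and b :: "'v \<Rightarrow> int"
  assumes finV: "finite V" and finR: "finite R" and card_eq: "card R = card V" and K: "0 < K"
    and kernel: "\<And>w. \<forall>v\<in>V. K dvd (\<Sum>r\<in>R. M v r * w r) \<Longrightarrow> \<forall>r\<in>R. K dvd w r"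
  shows "\<exists>w. \<forall>v\<in>V. K dvd (\<Sum>r\<in>R. M v r * w r) - b v"
proof -
  define A where "A = (\<Pi>\<^sub>E r\<in>R. {0..<K})"
  define B where "B = (\<Pi>\<^sub>E v\<in>V. {0..<K})"
  define residues where "residues w = restrict (\<lambda>v. (\<Sum>r\<in>R. M v r * w r) mod K) V" for w
  have inj: "inj_on residues A"
    unfolding residues_def A_def by (rule inj_on_residues_if_trivial_kernel[OF kernel])
  have maps: "residues ` A \<subseteq> B" unfolding residues_def B_def using K by auto
  have cA: "card A = nat K ^ card R" unfolding A_def using finR by (simp add: card_PiE)
  have cB: "card B = nat K ^ card V" unfolding B_def using finV by (simp add: card_PiE)
  have finB: "finite B" unfolding B_def using finV by (simp add: finite_PiE)
  have onto: "residues ` A = B"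
    using card_subset_eq[OF finB maps] card_image[OF inj] cA cB card_eq by simp
  define target where "target = restrict (\<lambda>v. b v mod K) V"
  have "target \<in> B" unfolding target_def B_def using K by auto
  then obtain w where w: "residues w = target" using onto by blast
  have "(\<Sum>r\<in>R. M v r * w r) mod K = b v mod K" if "v \<in> V" for v
    using fun_cong[OF w, of v] that unfolding residues_def target_def by simp
  then have "\<forall>v\<in>V. K dvd (\<Sum>r\<in>R. M v r * w r) - b v" by (simp add: mod_eq_dvd_iff)
  then show ?thesis by blast
qed

section \<open>Reduced knot diagrams\<close>

definition shading_sign :: "'a set \<Rightarrow> 'a \<Rightarrow> int" where
  "shading_sign S r = (if r \<in> S then 1 else -1)"

lemma shading_sign_mult_self [simp]:
  "shading_sign S r * shading_sign S r = 1"
  "shading_sign S r * (shading_sign S r * x) = x"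
  by (simp_all add: shading_sign_def)

locale reduced_knot_diagram =
  fixes H :: "'d set" and al sg :: "'d \<Rightarrow> 'd"
  assumes knot: "knot_diagram H al sg" and reduced: "reduced H al sg"
begin

lemma finite_darts: "finite H"
  and darts_nonempty: "H \<noteq> {}"
  and bij_sg: "bij_betw sg H H"
  and al_in: "d \<in> H \<Longrightarrow> al d \<in> H"
  and al_neq: "d \<in> H \<Longrightarrow> al d \<noteq> d"
  and al_al: "d \<in> H \<Longrightarrow> al (al d) = d"
  and card_orb_sg: "d \<in> H \<Longrightarrow> card (orb sg d) = 4"
  and darts_connected: "d \<in> H \<Longrightarrow> e \<in> H \<Longrightarrow>
        (d, e) \<in> ({(x, al x) | x. x \<in> H} \<union> {(x, sg x) | x. x \<in> H})\<^sup>*"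
  and euler: "int (card (vertices H sg)) - int (card (edges H al)) + int (card (regions H al sg)) = 2"
  and card_straight_orbits: "card ((\<lambda>d. orb (straight al sg) d) ` H) = 2"
  using knot unfolding knot_diagram_def by blast+

lemma sg_in: "d \<in> H \<Longrightarrow> sg d \<in> H"
  using bij_betwE[OF bij_sg] by blast

lemma bij_al: "bij_betw al H H"
  by (rule bij_betwI[where g = al]) (auto simp: al_in al_al)

lemma sg_funpow_4: "d \<in> H \<Longrightarrow> (sg ^^ 4) d = d"
  using funpow_card_orb[OF finite_darts bij_sg, of d] card_orb_sg[of d] by simp

lemma sg4: "d \<in> H \<Longrightarrow> sg (sg (sg (sg d))) = d"
  using sg_funpow_4[of d] by (simp add: eval_nat_numeral)

lemma sg_sg_neq: "d \<in> H \<Longrightarrow> sg (sg d) \<noteq> d"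
proof
  assume "d \<in> H" "sg (sg d) = d"
  then have "card (orb sg d) \<le> 2" by (intro card_orb_le_period) (simp_all add: eval_nat_numeral)
  with \<open>d \<in> H\<close> show False using card_orb_sg by simp
qed

lemma orb_sg: "d \<in> H \<Longrightarrow> orb sg d = {d, sg d, sg (sg d), sg (sg (sg d))}"
  using orb_eq_funpow_image[of 4 sg d] sg_funpow_4[of d]
  by (simp add: lessThan_Suc eval_nat_numeral insert_commute)

lemma orb_al: "d \<in> H \<Longrightarrow> orb al d = {d, al d}"
  using orb_eq_funpow_image[of 2 al d] al_al[of d]
  by (simp add: lessThan_Suc eval_nat_numeral insert_commute)

lemma card_darts_vertices: "card H = 4 * card (vertices H sg)"
  unfolding vertices_def by (rule card_eq_mult_card_orbits[OF finite_darts bij_sg card_orb_sg])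

lemma card_darts_edges: "card H = 2 * card (edges H al)"
proof -
  have "edges H al = (\<lambda>d. orb al d) ` H" unfolding edges_def using orb_al by simp
  moreover have "card (orb al d) = 2" if "d \<in> H" for d
    using orb_al[OF that] al_neq[OF that] by simp
  ultimately show ?thesis using card_eq_mult_card_orbits[OF finite_darts bij_al] by simp
qed

lemma card_regions: "card (regions H al sg) = card (vertices H sg) + 2"
  using euler card_darts_vertices card_darts_edges by simp

definition face :: "'d \<Rightarrow> 'd set" where
  "face d = orb (sg \<circ> al) d"

lemma bij_face_step: "bij_betw (sg \<circ> al) H H"
  using bij_betw_trans[OF bij_al bij_sg] .

lemma regions_eq: "regions H al sg = face ` H"
  unfolding regions_def face_def ..

lemma finite_regions: "finite (regions H al sg)"
  unfolding regions_eq using finite_darts by simp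

lemma face_in_regions: "x \<in> H \<Longrightarrow> face x \<in> regions H al sg"
  unfolding regions_eq by blast

lemma face_self: "d \<in> face d"
  unfolding face_def by (rule orb_self)

lemma face_eq: "d \<in> H \<Longrightarrow> x \<in> face d \<Longrightarrow> face x = face d"
  unfolding face_def by (rule orb_eq[OF finite_darts bij_face_step])

lemma face_al: "x \<in> H \<Longrightarrow> face (al x) = face (sg x)"
proof -
  assume x: "x \<in> H"
  have "sg x = (sg \<circ> al) (al x)" using al_al[OF x] by simp
  then have "sg x \<in> face (al x)"
    unfolding face_def using funpow_in_orb[where f = "sg \<circ> al" and n = 1 and d = "al x"] by simp
  then show ?thesis using face_eq[OF al_in[OF x]] by simp
qed

lemma region_eq_face: "r \<in> regions H al sg \<Longrightarrow> y \<in> r \<Longrightarrow> r = face y \<and> y \<in> H"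
proof -
  assume r: "r \<in> regions H al sg" and y: "y \<in> r"
  then obtain d where d: "d \<in> H" "r = face d" unfolding regions_eq by blast
  then have "face y = face d" using face_eq y by simp
  moreover have "y \<in> H"
    using orb_closed[OF bij_face_step d(1)] d(2) y unfolding face_def by blast
  ultimately show ?thesis using d by simp
qed

lemma faces_at_vertex:
  assumes d: "d \<in> H"
  shows "{r \<in> regions H al sg. incident (orb sg d) r} =
    {face d, face (sg d), face (sg (sg d)), face (sg (sg (sg d)))}"
proof (intro equalityI subsetI)
  fix r assume "r \<in> {r \<in> regions H al sg. incident (orb sg d) r}"
  then obtain y where "r \<in> regions H al sg" "y \<in> orb sg d" "y \<in> r"
    unfolding incident_def by blast
  then have "r = face y" using region_eq_face by blast
  then show "r \<in> {face d, face (sg d), face (sg (sg d)), face (sg (sg (sg d)))}"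
    using \<open>y \<in> orb sg d\<close> orb_sg[OF d] by auto
next
  fix r assume "r \<in> {face d, face (sg d), face (sg (sg d)), face (sg (sg (sg d)))}"
  then obtain y where y: "y \<in> orb sg d" "r = face y" using orb_sg[OF d] by blast
  then have "y \<in> H" using orb_closed[OF bij_sg d] by blast
  then show "r \<in> {r \<in> regions H al sg. incident (orb sg d) r}"
    using y face_in_regions[of y] face_self[of y] unfolding incident_def by blast
qed

lemma distinct_faces_at_vertex:
  assumes d: "d \<in> H"
  shows "distinct [face d, face (sg d), face (sg (sg d)), face (sg (sg (sg d)))]"
proof -
  have "irreducible_vertex H al sg (orb sg d)"
    using reduced d unfolding reduced_def vertices_def by blast
  then have "card {face d, face (sg d), face (sg (sg d)), face (sg (sg (sg d)))} = 4"
    unfolding irreducible_vertex_def faces_at_vertex[OF d] .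
  then show ?thesis by (intro card_distinct) simp
qed

abbreviation st :: "'d \<Rightarrow> 'd" where
  "st \<equiv> straight al sg"

lemma straight_eq: "st x = sg (sg (al x))"
  unfolding straight_def by simp

lemma bij_straight: "bij_betw st H H"
  unfolding straight_def using bij_betw_trans[OF bij_face_step bij_sg] by (simp add: comp_assoc)

lemma straight_al_straight: "x \<in> H \<Longrightarrow> st (al (st x)) = al x"
  unfolding straight_eq using al_al sg4 al_in sg_in by simp

lemma al_straight_funpow:
  assumes x: "x \<in> H" and j: "al x = (st ^^ j) x"
  shows "i \<le> j \<Longrightarrow> al ((st ^^ i) x) = (st ^^ (j - i)) x"
proof (induction i)
  case 0
  then show ?case using j by simp
next
  case (Suc i)
  have "st (al ((st ^^ Suc i) x)) = al ((st ^^ i) x)"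
    using straight_al_straight[OF funpow_closed[OF bij_straight x]] by simp
  also have "\<dots> = (st ^^ (j - i)) x" using Suc by simp
  also have "j - i = Suc (j - Suc i)" using Suc.prems by simp
  finally have "st (al ((st ^^ Suc i) x)) = st ((st ^^ (j - Suc i)) x)" by simp
  moreover have "al ((st ^^ Suc i) x) \<in> H" "(st ^^ (j - Suc i)) x \<in> H"
    using al_in funpow_closed[OF bij_straight x] by blast+
  ultimately show ?case
    by (rule inj_onD[OF bij_betw_imp_inj_on[OF bij_straight]])
qed

text \<open>A straight-ahead walk never meets its own reversal: it would have to turn back either on an
  edge (a fixed point of \<open>al\<close>) or at a crossing (a fixed point of \<open>sg \<circ> sg\<close>).\<close>
lemma al_notin_straight_orb:
  assumes x: "x \<in> H"
  shows "al x \<notin> orb st x"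
proof
  assume "al x \<in> orb st x"
  then obtain j where j: "al x = (st ^^ j) x" unfolding orb_def by blast
  define y where "y = (st ^^ (j div 2)) x"
  have y: "y \<in> H" unfolding y_def using funpow_closed[OF bij_straight x] .
  show False
  proof (cases "even j")
    case True
    then have "j - j div 2 = j div 2" by presburger
    then have "al y = y" unfolding y_def using al_straight_funpow[OF x j, of "j div 2"] by simp
    then show False using al_neq[OF y] by simp
  next
    case False
    then have "j - j div 2 = Suc (j div 2)" by presburger
    then have "al y = st y" unfolding y_def using al_straight_funpow[OF x j, of "j div 2"] by simp
    then show False using sg_sg_neq[OF al_in[OF y]] unfolding straight_eq by simp
  qed
qed

lemma straight_orbits:
  assumes x: "x \<in> H" and y: "y \<in> H"
  shows "y \<in> orb st x \<or> y \<in> orb st (al x)"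
proof -
  let ?T = "(\<lambda>d. orb st d) ` H"
  have "orb st x \<noteq> orb st (al x)"
    using al_notin_straight_orb[OF x] orb_self[of "al x" st] by auto
  then have "card {orb st x, orb st (al x)} = card ?T" using card_straight_orbits by simp
  moreover have "{orb st x, orb st (al x)} \<subseteq> ?T" using x al_in[OF x] by blast
  moreover have "finite ?T" using finite_darts by simp
  ultimately have "{orb st x, orb st (al x)} = ?T" by (intro card_subset_eq)
  moreover have "orb st y \<in> ?T" using y by (rule imageI)
  ultimately have "orb st y = orb st x \<or> orb st y = orb st (al x)" by blast
  then show ?thesis using orb_self[of y st] by metis
qed

abbreviation dart_step :: "('d \<times> 'd) set" where
  "dart_step \<equiv> {(x, al x) | x. x \<in> H} \<union> {(x, sg x) | x. x \<in> H}"

lemma dart_step_face: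
  assumes "(e, e') \<in> dart_step"
  shows "e \<in> H" "face e' = face (al e)"
proof -
  from assms show "e \<in> H" by blast
  from assms have "e' = al e \<or> e' = sg e" by blast
  then show "face e' = face (al e)" using face_al[OF \<open>e \<in> H\<close>] by auto
qed

lemma adjacent_face_al:
  assumes x: "x \<in> H" and ne: "face x \<noteq> face (al x)"
  shows "adjacent H al (face x) (face (al x))"
proof -
  have "{x, al x} \<in> edges H al" unfolding edges_def using x by (rule imageI)
  moreover have "edge_incident {x, al x} (face x)" "edge_incident {x, al x} (face (al x))"
    unfolding edge_incident_def using face_self[of x] face_self[of "al x"] by blast+
  ultimately show ?thesis unfolding adjacent_def using ne by blast
qed

lemma adjacent_faces:
  assumes r: "r \<in> regions H al sg" and r': "r' \<in> regions H al sg" and adj: "adjacent H al r r'"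
  shows "\<exists>x\<in>H. r = face x \<and> r' = face (al x)"
proof -
  obtain e where e: "e \<in> edges H al" "edge_incident e r" "edge_incident e r'" and ne: "r \<noteq> r'"
    using adj unfolding adjacent_def by blast
  then obtain x where x: "x \<in> H" "e = {x, al x}" unfolding edges_def by blast
  have side: "\<rho> = face x \<or> \<rho> = face (al x)"
    if \<rho>: "\<rho> \<in> regions H al sg" and inc: "edge_incident e \<rho>" for \<rho>
  proof -
    obtain y where "y \<in> e" "y \<in> \<rho>" using inc unfolding edge_incident_def by blast
    then show ?thesis using region_eq_face[OF \<rho>, of y] x(2) by auto
  qed
  show ?thesis
  proof (cases "r = face x")
    case True
    then have "r' = face (al x)" using side[OF r' e(3)] ne by auto
    then show ?thesis using True x(1) by blast
  next
    case False
    then have "r = face (al x)" "r' = face (al (al x))"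
      using side[OF r e(2)] side[OF r' e(3)] ne al_al[OF x(1)] by auto
    then show ?thesis using al_in[OF x(1)] by blast
  qed
qed

lemma dual_path_exists:
  assumes r: "r \<in> regions H al sg" and r': "r' \<in> regions H al sg"
  shows "\<exists>n ps. length ps = Suc n \<and> hd ps = r \<and> last ps = r' \<and> set ps \<subseteq> regions H al sg \<and>
           (\<forall>i<n. adjacent H al (ps ! i) (ps ! Suc i))"
proof -
  obtain y0 where y0: "y0 \<in> H" "r = face y0" using r regions_eq by auto
  obtain y1 where y1: "y1 \<in> H" "r' = face y1" using r' regions_eq by auto
  have "\<exists>n ps. length ps = Suc n \<and> hd ps = r \<and> last ps = face e \<and> set ps \<subseteq> regions H al sg \<and>
           (\<forall>i<n. adjacent H al (ps ! i) (ps ! Suc i))" if "(y0, e) \<in> dart_step\<^sup>*" for e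
    using that
  proof (induction rule: rtrancl_induct)
    case base
    show ?case using y0 face_in_regions by (intro exI[of _ 0] exI[of _ "[r]"]) simp
  next
    case (step e e')
    note e = dart_step_face[OF step.hyps(2)]
    from step.IH obtain n ps where ps: "length ps = Suc n" "hd ps = r" "last ps = face e"
      "set ps \<subseteq> regions H al sg" "\<forall>i<n. adjacent H al (ps ! i) (ps ! Suc i)" by blast
    show ?case
    proof (cases "face (al e) = face e")
      case True
      then show ?thesis using ps e(2) by (intro exI[of _ n] exI[of _ ps]) simp
    next
      case False
      have "ps \<noteq> []" using ps(1) by auto
      then have "ps ! n = face e" using ps(1,3) by (simp add: last_conv_nth)
      then have "\<forall>i<Suc n. adjacent H al ((ps @ [face (al e)]) ! i) ((ps @ [face (al e)]) ! Suc i)"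
        using ps(1,5) adjacent_face_al[OF e(1)] False by (auto simp: nth_append less_Suc_eq)
      then show ?thesis
        using ps \<open>ps \<noteq> []\<close> e face_in_regions[OF al_in[OF e(1)]]
        by (intro exI[of _ "Suc n"] exI[of _ "ps @ [face (al e)]"]) simp
    qed
  qed
  from this[OF darts_connected[OF y0(1) y1(1)]] show ?thesis unfolding y1(2) .
qed

lemma dual_dist_path:
  assumes "r \<in> regions H al sg" "r' \<in> regions H al sg"
  obtains ps where "length ps = Suc (dual_dist H al sg r r')" "ps ! 0 = r"
    "ps ! dual_dist H al sg r r' = r'" "set ps \<subseteq> regions H al sg"
    "\<And>i. i < dual_dist H al sg r r' \<Longrightarrow> adjacent H al (ps ! i) (ps ! Suc i)"
proof -
  let ?d = "dual_dist H al sg r r'"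
  have "\<exists>ps. length ps = Suc ?d \<and> hd ps = r \<and> last ps = r' \<and> set ps \<subseteq> regions H al sg \<and>
           (\<forall>i<?d. adjacent H al (ps ! i) (ps ! Suc i))"
    unfolding dual_dist_def by (rule LeastI_ex) (use dual_path_exists[OF assms] in blast)
  then obtain ps where ps: "length ps = Suc ?d" "hd ps = r" "last ps = r'"
    "set ps \<subseteq> regions H al sg" "\<forall>i<?d. adjacent H al (ps ! i) (ps ! Suc i)" by blast
  moreover have "ps \<noteq> []" using ps(1) by auto
  ultimately show thesis using that by (simp add: hd_conv_nth last_conv_nth)
qed

lemma regions_congruent_if_edges_congruent:
  fixes q :: "'d set \<Rightarrow> int" and K :: int
  assumes jumps: "\<And>x. x \<in> H \<Longrightarrow> K dvd q (face x) - q (face (al x))"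
    and r: "r \<in> regions H al sg" and r': "r' \<in> regions H al sg"
  shows "K dvd q r - q r'"
proof -
  obtain y where y: "y \<in> H" "r' = face y" using r' regions_eq by auto
  obtain z where z: "z \<in> H" "r = face z" using r regions_eq by auto
  have "K dvd q (face e) - q (face y)" if "(y, e) \<in> dart_step\<^sup>*" for e
    using that
  proof (induction rule: rtrancl_induct)
    case (step e e')
    note e = dart_step_face[OF step.hyps(2)]
    have "K dvd q (face e') - q (face e)" using jumps[OF e(1)] e(2) by (simp add: dvd_diff_commute)
    from dvd_add[OF this step.IH] show ?case by simp
  qed simp
  from this[OF darts_connected[OF y(1) z(1)]] show ?thesis using y z by simp
qed

section \<open>Null patterns\<close>

definition null_pattern :: "nat \<Rightarrow> ('d set \<Rightarrow> 'd set \<Rightarrow> int) \<Rightarrow> ('d set \<Rightarrow> int) \<Rightarrow> bool" where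
  "null_pattern k a w \<longleftrightarrow>
     (\<forall>v \<in> vertices H sg. int k dvd (\<Sum>r\<in>regions H al sg. game_matrix a v r * w r))"

lemma null_pattern_face_sum:
  assumes game: "game_version H al sg k a" and null: "null_pattern k a w" and d: "d \<in> H"
  shows "int k dvd w (face d) + w (face (sg d)) + w (face (sg (sg d))) + w (face (sg (sg (sg d))))"
proof -
  let ?v = "orb sg d"
  let ?I = "{r \<in> regions H al sg. incident ?v r}"
  have v: "?v \<in> vertices H sg" unfolding vertices_def using d by (rule imageI)
  then have "irreducible_vertex H al sg ?v" using reduced unfolding reduced_def by blast
  then obtain c where c: "non_zero_divisor k c"
      "\<And>r. r \<in> regions H al sg \<Longrightarrow> incident ?v r \<Longrightarrow> [a ?v r = c] (mod int k)"
    using game v unfolding game_version_def by blast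
  have "int k dvd (\<Sum>r\<in>regions H al sg. game_matrix a ?v r * w r)"
    using null v unfolding null_pattern_def by blast
  also have "(\<Sum>r\<in>regions H al sg. game_matrix a ?v r * w r) =
      (\<Sum>r\<in>regions H al sg. if incident ?v r then a ?v r * w r else 0)"
    by (rule sum.cong) (auto simp: game_matrix_def)
  also have "\<dots> = (\<Sum>r\<in>?I. a ?v r * w r)"
    using sum.inter_filter[OF finite_regions, of "\<lambda>r. a ?v r * w r" "incident ?v"] by simp
  finally have sum_I: "[(\<Sum>r\<in>?I. a ?v r * w r) = 0] (mod int k)" by (simp add: cong_0_iff)
  have "[(\<Sum>r\<in>?I. a ?v r * w r) = (\<Sum>r\<in>?I. c * w r)] (mod int k)"
    by (rule cong_sum) (use c(2) in \<open>auto intro: cong_scalar_right\<close>)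
  from cong_trans[OF cong_sym[OF this] sum_I] have "[(\<Sum>r\<in>?I. c * w r) = 0] (mod int k)" .
  then have "[c * (\<Sum>r\<in>?I. w r) = 0] (mod int k)" by (simp add: sum_distrib_left)
  then have "[(\<Sum>r\<in>?I. w r) = 0] (mod int k)"
    using c(1) unfolding non_zero_divisor_def by blast
  moreover have "(\<Sum>r\<in>?I. w r) =
      w (face d) + w (face (sg d)) + w (face (sg (sg d))) + w (face (sg (sg (sg d))))"
    using faces_at_vertex[OF d] distinct_faces_at_vertex[OF d] by (simp add: add.assoc)
  ultimately show ?thesis by (simp add: cong_0_iff)
qed

lemma shading_sign_face_sg:
  assumes checker: "checkerboard H al sg S" and x: "x \<in> H"
  shows "shading_sign S (face (sg x)) = - shading_sign S (face x)"
proof -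
  have "face x \<noteq> face (al x)" using distinct_faces_at_vertex[OF x] face_al[OF x] by simp
  then have "adjacent H al (face x) (face (al x))" by (rule adjacent_face_al[OF x])
  then have "face x \<in> S \<longleftrightarrow> face (al x) \<notin> S"
    using checker face_in_regions[OF x] face_in_regions[OF al_in[OF x]]
    unfolding checkerboard_def by blast
  then show ?thesis using face_al[OF x] unfolding shading_sign_def by auto
qed

definition jump :: "('d set \<Rightarrow> int) \<Rightarrow> 'd \<Rightarrow> int" where
  "jump q x = q (face x) - q (face (al x))"

lemma jump_al: "x \<in> H \<Longrightarrow> jump q (al x) = - jump q x"
  unfolding jump_def using al_al by simp

text \<open>The shading signs of the four faces around a crossing alternate, so after signing the
  pattern its vertex sum becomes, up to a unit, the sum of the jumps across two opposite edges.\<close>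
lemma null_pattern_jumps_cancel:
  assumes game: "game_version H al sg k a" and checker: "checkerboard H al sg S"
    and null: "null_pattern k a w" and x: "x \<in> H"
  shows "int k dvd jump (\<lambda>r. shading_sign S r * w r) x
                 + jump (\<lambda>r. shading_sign S r * w r) (sg (sg x))"
proof -
  let ?s = "shading_sign S" and ?q = "\<lambda>r. shading_sign S r * w r"
  let ?J = "jump ?q x + jump ?q (sg (sg x))"
  define F0 F1 F2 F3 where "F0 = face x" "F1 = face (sg x)" "F2 = face (sg (sg x))"
    "F3 = face (sg (sg (sg x)))"
  have x1: "sg x \<in> H" and x2: "sg (sg x) \<in> H" using x sg_in by auto
  have signs: "?s F1 = - ?s F0" "?s F2 = ?s F0" "?s F3 = - ?s F0"
    using shading_sign_face_sg[OF checker] x x1 x2 unfolding F0_F1_F2_F3_def by simp_all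
  have "face (al x) = F1" "face (al (sg (sg x))) = F3"
    unfolding F0_F1_F2_F3_def using face_al x x2 by simp_all
  then have "w F0 + w F1 + w F2 + w F3 = ?s F0 * ?J"
    unfolding jump_def using signs unfolding F0_F1_F2_F3_def by (simp add: algebra_simps)
  moreover have "int k dvd w F0 + w F1 + w F2 + w F3"
    using null_pattern_face_sum[OF game null x] unfolding F0_F1_F2_F3_def .
  ultimately have "int k dvd ?s F0 * ?J" by simp
  then have "int k dvd ?s F0 * (?s F0 * ?J)" by (rule dvd_mult)
  then show ?thesis by simp
qed

lemma jumps_equal_up_to_sign:
  fixes J :: "'d \<Rightarrow> int" and K :: int
  assumes opposite: "\<And>x. x \<in> H \<Longrightarrow> K dvd J x + J (sg (sg x))"
    and anti: "\<And>x. x \<in> H \<Longrightarrow> J (al x) = - J x"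
    and x0: "x0 \<in> H" and y: "y \<in> H"
  shows "K dvd J y - J x0 \<or> K dvd J y + J x0"
proof -
  have step: "K dvd J (st x) - J x" if x: "x \<in> H" for x
  proof -
    have "J (st x) - J x = J (al x) + J (sg (sg (al x)))" using anti[OF x] unfolding straight_eq by simp
    then show ?thesis using opposite[OF al_in[OF x]] by simp
  qed
  have along: "K dvd J ((st ^^ n) x) - J x" if x: "x \<in> H" for x n
  proof (induction n)
    case (Suc n)
    have "K dvd J (st ((st ^^ n) x)) - J ((st ^^ n) x)"
      using step[OF funpow_closed[OF bij_straight x]] .
    from dvd_add[OF this Suc.IH] show ?case by simp
  qed simp
  from straight_orbits[OF x0 y] show ?thesis
  proof
    assume "y \<in> orb st x0"
    then obtain n where "y = (st ^^ n) x0" unfolding orb_def by blast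
    then show ?thesis using along[OF x0] by simp
  next
    assume "y \<in> orb st (al x0)"
    then obtain n where "y = (st ^^ n) (al x0)" unfolding orb_def by blast
    then show ?thesis using along[OF al_in[OF x0]] anti[OF x0] by simp
  qed
qed

lemma adjacent_jump:
  fixes q :: "'d set \<Rightarrow> int" and K \<beta> :: int
  assumes jumps: "\<And>x. x \<in> H \<Longrightarrow> K dvd jump q x - \<beta> \<or> K dvd jump q x + \<beta>"
    and r: "r \<in> regions H al sg" and r': "r' \<in> regions H al sg" and adj: "adjacent H al r r'"
  obtains \<epsilon> :: int where "\<epsilon> = 1 \<or> \<epsilon> = -1" "K dvd q r' - q r - \<epsilon> * \<beta>"
proof -
  obtain x where x: "x \<in> H" "r = face x" "r' = face (al x)" using adjacent_faces[OF r r' adj] by blast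
  then have diff: "q r' - q r = - jump q x" unfolding jump_def by simp
  from jumps[OF x(1)] show thesis
  proof
    assume "K dvd jump q x - \<beta>"
    moreover have "q r' - q r - (-1) * \<beta> = - (jump q x - \<beta>)" using diff by simp
    ultimately have "K dvd q r' - q r - (-1) * \<beta>" by (simp only: dvd_minus_iff)
    then show thesis using that[of "-1"] by simp
  next
    assume "K dvd jump q x + \<beta>"
    moreover have "q r' - q r - 1 * \<beta> = - (jump q x + \<beta>)" using diff by simp
    ultimately have "K dvd q r' - q r - 1 * \<beta>" by (simp only: dvd_minus_iff)
    then show thesis using that[of 1] by simp
  qed
qed

lemma dual_path_increment:
  fixes q :: "'d set \<Rightarrow> int" and K \<beta> :: int
  assumes jumps: "\<And>x. x \<in> H \<Longrightarrow> K dvd jump q x - \<beta> \<or> K dvd jump q x + \<beta>"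
    and ps: "set ps \<subseteq> regions H al sg" "length ps = Suc n"
      "\<And>i. i < n \<Longrightarrow> adjacent H al (ps ! i) (ps ! Suc i)"
  shows "\<exists>m. \<bar>m\<bar> \<le> int n \<and> even (m + int n) \<and> K dvd q (ps ! n) - q (ps ! 0) - m * \<beta>"
proof -
  have "\<exists>m. \<bar>m\<bar> \<le> int i \<and> even (m + int i) \<and> K dvd q (ps ! i) - q (ps ! 0) - m * \<beta>"
    if "i \<le> n" for i
    using that
  proof (induction i)
    case (Suc i)
    then obtain m where m: "\<bar>m\<bar> \<le> int i" "even (m + int i)" "K dvd q (ps ! i) - q (ps ! 0) - m * \<beta>"
      by auto
    have "ps ! i \<in> regions H al sg" "ps ! Suc i \<in> regions H al sg"
      using ps(1,2) Suc.prems nth_mem[of i ps] nth_mem[of "Suc i" ps] by auto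
    moreover have "adjacent H al (ps ! i) (ps ! Suc i)" using ps(3) Suc.prems by simp
    ultimately obtain \<epsilon> :: int where \<epsilon>: "\<epsilon> = 1 \<or> \<epsilon> = -1" "K dvd q (ps ! Suc i) - q (ps ! i) - \<epsilon> * \<beta>"
      using adjacent_jump[OF jumps, where r = "ps ! i" and r' = "ps ! Suc i"] by blast
    have "K dvd q (ps ! Suc i) - q (ps ! 0) - (m + \<epsilon>) * \<beta>"
      using dvd_add[OF \<epsilon>(2) m(3)] by (simp add: algebra_simps)
    moreover have "\<bar>m + \<epsilon>\<bar> \<le> int (Suc i)" "even (m + \<epsilon> + int (Suc i))" using m(1,2) \<epsilon>(1) by auto
    ultimately show ?case by blast
  qed (intro exI[of _ 0], simp)
  then show ?thesis by blast
qed

lemma checkerboard_path_parity: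
  assumes checker: "checkerboard H al sg S"
    and ps: "set ps \<subseteq> regions H al sg" "length ps = Suc n"
      "\<And>i. i < n \<Longrightarrow> adjacent H al (ps ! i) (ps ! Suc i)"
  shows "i \<le> n \<Longrightarrow> ps ! i \<in> S \<longleftrightarrow> (ps ! 0 \<in> S \<longleftrightarrow> even i)"
proof (induction i)
  case (Suc i)
  have "ps ! i \<in> regions H al sg" "ps ! Suc i \<in> regions H al sg"
    using ps(1,2) Suc.prems nth_mem[of i ps] nth_mem[of "Suc i" ps] by auto
  moreover have "adjacent H al (ps ! i) (ps ! Suc i)" using ps(3) Suc.prems by simp
  ultimately have "ps ! Suc i \<in> S \<longleftrightarrow> ps ! i \<notin> S" using checker unfolding checkerboard_def by blast
  then show ?case using Suc by simp
qed simp

lemma null_pattern_jump_vanishes: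
  assumes game: "game_version H al sg k a" and checker: "checkerboard H al sg S"
    and r1: "r1 \<in> regions H al sg" "r1 \<in> S" and r2: "r2 \<in> regions H al sg" "r2 \<notin> S"
    and coprime: "\<forall>m. odd m \<longrightarrow> m \<le> dual_dist H al sg r1 r2 \<longrightarrow> coprime m k"
    and null: "null_pattern k a w" and w1: "int k dvd w r1" and w2: "int k dvd w r2"
    and x: "x \<in> H"
  shows "int k dvd jump (\<lambda>r. shading_sign S r * w r) x"
proof -
  define q where "q r = shading_sign S r * w r" for r
  obtain x0 where x0: "x0 \<in> H" using darts_nonempty by blast
  define \<beta> where "\<beta> = jump q x0"
  have jumps: "int k dvd jump q y - \<beta> \<or> int k dvd jump q y + \<beta>" if "y \<in> H" for y
    unfolding \<beta>_def
  proof (rule jumps_equal_up_to_sign[OF _ _ x0 that])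
    show "int k dvd jump q z + jump q (sg (sg z))" if "z \<in> H" for z
      unfolding q_def by (rule null_pattern_jumps_cancel[OF game checker null that])
  qed (rule jump_al)
  let ?d = "dual_dist H al sg r1 r2"
  obtain ps where ps: "length ps = Suc ?d" "ps ! 0 = r1" "ps ! ?d = r2" "set ps \<subseteq> regions H al sg"
      "\<And>i. i < ?d \<Longrightarrow> adjacent H al (ps ! i) (ps ! Suc i)"
    using dual_dist_path[OF r1(1) r2(1)] by blast
  have "odd ?d" using checkerboard_path_parity[OF checker ps(4,1,5) order.refl] ps(2,3) r1(2) r2(2)
    by simp
  obtain m where m: "\<bar>m\<bar> \<le> int ?d" "even (m + int ?d)" "int k dvd q r2 - q r1 - m * \<beta>"
    using dual_path_increment[OF jumps ps(4,1,5)] ps(2,3) by auto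
  have q1: "int k dvd q r1" and q2: "int k dvd q r2" using w1 w2 unfolding q_def by simp_all
  have "int k dvd (q r2 - q r1) - (q r2 - q r1 - m * \<beta>)"
    using dvd_diff[OF q2 q1] m(3) by (rule dvd_diff)
  then have "int k dvd m * \<beta>" by simp
  moreover have "coprime (nat \<bar>m\<bar>) k"
  proof (rule coprime[rule_format])
    show "odd (nat \<bar>m\<bar>)" using m(2) \<open>odd ?d\<close> by (simp add: even_nat_iff)
    show "nat \<bar>m\<bar> \<le> ?d" using m(1) by simp
  qed
  then have "coprime (int k) m" by (simp add: coprime_commute)
  ultimately have \<beta>: "int k dvd \<beta>" by (simp add: coprime_dvd_mult_right_iff)
  from jumps[OF x] show ?thesis
  proof
    assume "int k dvd jump q x - \<beta>"
    from dvd_add[OF this \<beta>] show ?thesis unfolding q_def by simp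
  next
    assume "int k dvd jump q x + \<beta>"
    from dvd_diff[OF this \<beta>] show ?thesis unfolding q_def by simp
  qed
qed

lemma null_pattern_vanishes:
  assumes game: "game_version H al sg k a" and checker: "checkerboard H al sg S"
    and r1: "r1 \<in> regions H al sg" "r1 \<in> S" and r2: "r2 \<in> regions H al sg" "r2 \<notin> S"
    and coprime: "\<forall>m. odd m \<longrightarrow> m \<le> dual_dist H al sg r1 r2 \<longrightarrow> coprime m k"
    and null: "null_pattern k a w" and w1: "int k dvd w r1" and w2: "int k dvd w r2"
    and r: "r \<in> regions H al sg"
  shows "int k dvd w r"
proof -
  let ?q = "\<lambda>r. shading_sign S r * w r"
  have "int k dvd ?q r - ?q r1"
    using null_pattern_jump_vanishes[OF game checker r1 r2 coprime null w1 w2]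
    unfolding jump_def by (rule regions_congruent_if_edges_congruent[OF _ r r1(1)])
  moreover have "int k dvd ?q r1" using w1 by (rule dvd_mult)
  ultimately have "int k dvd (?q r - ?q r1) + ?q r1" by (rule dvd_add)
  then have "int k dvd ?q r" by simp
  then have "int k dvd shading_sign S r * ?q r" by (rule dvd_mult)
  then show ?thesis by simp
qed

section \<open>Solving patterns\<close>

lemma sum_zero_extension:
  fixes g f :: "'d set \<Rightarrow> int"
  assumes "R' \<subseteq> regions H al sg"
  shows "(\<Sum>r\<in>regions H al sg. g r * (if r \<in> R' then f r else 0)) = (\<Sum>r\<in>R'. g r * f r)"
proof -
  have "(\<Sum>r\<in>regions H al sg. g r * (if r \<in> R' then f r else 0)) =
      (\<Sum>r\<in>R'. g r * (if r \<in> R' then f r else 0))"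
    by (rule sum.mono_neutral_right[OF finite_regions assms]) auto
  then show ?thesis by simp
qed

lemma solving_pattern_unique:
  assumes vanish: "\<forall>w. null_pattern k a w \<longrightarrow> int k dvd w r1 \<longrightarrow> int k dvd w r2 \<longrightarrow>
        (\<forall>r\<in>regions H al sg. int k dvd w r)"
    and p: "solving_pattern H al sg k a c p" "[p r1 = 0] (mod int k)" "[p r2 = 0] (mod int k)"
    and q: "solving_pattern H al sg k a c q" "[q r1 = 0] (mod int k)" "[q r2 = 0] (mod int k)"
    and r: "r \<in> regions H al sg"
  shows "[p r = q r] (mod int k)"
proof -
  have "null_pattern k a (\<lambda>r. p r - q r)"
    unfolding null_pattern_def
  proof
    fix v assume v: "v \<in> vertices H sg"
    let ?Mp = "\<Sum>r\<in>regions H al sg. game_matrix a v r * p r"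
    let ?Mq = "\<Sum>r\<in>regions H al sg. game_matrix a v r * q r"
    have "int k dvd c v + ?Mp" "int k dvd c v + ?Mq"
      using p(1) q(1) v unfolding solving_pattern_def cong_0_iff by blast+
    then have "int k dvd (c v + ?Mp) - (c v + ?Mq)" by (rule dvd_diff)
    moreover have "(\<Sum>r\<in>regions H al sg. game_matrix a v r * (p r - q r)) = (c v + ?Mp) - (c v + ?Mq)"
      by (simp add: right_diff_distrib sum_subtractf)
    ultimately show "int k dvd (\<Sum>r\<in>regions H al sg. game_matrix a v r * (p r - q r))" by simp
  qed
  moreover have "int k dvd p r1 - q r1" "int k dvd p r2 - q r2"
    using p(2,3) q(2,3) by (simp_all add: cong_0_iff dvd_diff)
  ultimately have "int k dvd p r - q r" using vanish[rule_format, of "\<lambda>r. p r - q r"] r by simp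
  then show ?thesis by (simp add: cong_iff_dvd_diff)
qed

lemma solving_pattern_exists:
  assumes k: "0 < k" and r1: "r1 \<in> regions H al sg" and r2: "r2 \<in> regions H al sg" and "r1 \<noteq> r2"
    and vanish: "\<forall>w. null_pattern k a w \<longrightarrow> int k dvd w r1 \<longrightarrow> int k dvd w r2 \<longrightarrow>
        (\<forall>r\<in>regions H al sg. int k dvd w r)"
  shows "\<exists>p. solving_pattern H al sg k a c p \<and> [p r1 = 0] (mod int k) \<and> [p r2 = 0] (mod int k)"
proof -
  let ?R = "regions H al sg" and ?V = "vertices H sg"
  let ?R' = "?R - {r1, r2}"
  define extend where "extend w r = (if r \<in> ?R' then w r else 0)" for w :: "'d set \<Rightarrow> int" and r
  have extend_sum: "(\<Sum>r\<in>?R. game_matrix a v r * extend w r) = (\<Sum>r\<in>?R'. game_matrix a v r * w r)"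
    for v w unfolding extend_def by (rule sum_zero_extension) blast
  have "\<exists>w. \<forall>v\<in>?V. int k dvd (\<Sum>r\<in>?R'. game_matrix a v r * w r) - (- c v)"
  proof (rule solvable_mod_if_trivial_kernel)
    show "finite ?V" unfolding vertices_def using finite_darts by simp
    show "finite ?R'" using finite_regions by simp
    show "card ?R' = card ?V"
      using card_regions r1 r2 \<open>r1 \<noteq> r2\<close> finite_regions by (simp add: card_Diff_subset)
    show "0 < int k" using k by simp
  next
    fix w assume "\<forall>v\<in>?V. int k dvd (\<Sum>r\<in>?R'. game_matrix a v r * w r)"
    then have "null_pattern k a (extend w)" unfolding null_pattern_def extend_sum .
    moreover have "extend w r1 = 0" "extend w r2 = 0" unfolding extend_def by simp_all
    ultimately have extend_dvd: "int k dvd extend w r" if "r \<in> ?R" for r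
      using vanish[rule_format, of "extend w"] that by simp
    show "\<forall>r\<in>?R'. int k dvd w r"
    proof
      fix r assume r: "r \<in> ?R'"
      then have "int k dvd extend w r" using extend_dvd by blast
      then show "int k dvd w r" using r unfolding extend_def by simp
    qed
  qed
  then obtain w where w: "\<forall>v\<in>?V. int k dvd (\<Sum>r\<in>?R'. game_matrix a v r * w r) - (- c v)" by blast
  have "solving_pattern H al sg k a c (extend w)"
    unfolding solving_pattern_def cong_0_iff extend_sum using w by (simp add: add.commute)
  moreover have "extend w r1 = 0" "extend w r2 = 0" unfolding extend_def by simp_all
  ultimately show ?thesis by auto
qed

lemma unique_solving_fixing_if_odd_coprime:
  assumes k: "0 < k" and game: "game_version H al sg k a" and checker: "checkerboard H al sg S"
    and r1: "r1 \<in> regions H al sg" "r1 \<in> S" and r2: "r2 \<in> regions H al sg" "r2 \<notin> S"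
    and coprime: "\<forall>m. odd m \<longrightarrow> m \<le> dual_dist H al sg r1 r2 \<longrightarrow> coprime m k"
  shows "unique_solving_fixing H al sg k a r1 r2"
proof -
  have vanish: "\<forall>w. null_pattern k a w \<longrightarrow> int k dvd w r1 \<longrightarrow> int k dvd w r2 \<longrightarrow>
      (\<forall>r\<in>regions H al sg. int k dvd w r)"
    using null_pattern_vanishes[OF game checker r1 r2 coprime] by blast
  have "r1 \<noteq> r2" using r1(2) r2(2) by blast
  show ?thesis
    unfolding unique_solving_fixing_def
  proof (intro allI conjI impI ballI)
    fix c
    show "\<exists>p. solving_pattern H al sg k a c p \<and> [p r1 = 0] (mod int k) \<and> [p r2 = 0] (mod int k)"
      using solving_pattern_exists[OF _ r1(1) r2(1) \<open>r1 \<noteq> r2\<close> vanish] k by simp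
  next
    fix c p q r
    assume "solving_pattern H al sg k a c p \<and> [p r1 = 0] (mod int k) \<and> [p r2 = 0] (mod int k) \<and>
      solving_pattern H al sg k a c q \<and> [q r1 = 0] (mod int k) \<and> [q r2 = 0] (mod int k)"
      and "r \<in> regions H al sg"
    then show "[p r = q r] (mod int k)"
      using solving_pattern_unique[OF vanish] by blast
  qed
qed

end

lemma coprime_if_less_least_odd_prime_dvd:
  fixes m k :: nat
  assumes odd: "odd m" and less: "m < (LEAST p. prime p \<and> odd p \<and> p dvd k)"
  shows "coprime m k"
proof (rule ccontr)
  assume "\<not> coprime m k"
  then obtain p where p: "prime p" "p dvd m" "p dvd k"
    by (metis coprime_iff_gcd_eq_1 gcd_dvd1 gcd_dvd2 dvd_trans prime_factor_nat)
  then have "odd p" using odd dvd_trans by blast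
  then have "(LEAST p. prime p \<and> odd p \<and> p dvd k) \<le> p" using p by (intro Least_le) simp
  moreover have "p \<le> m" using p(2) odd_pos[OF odd] by (simp add: dvd_imp_le)
  ultimately show False using less by simp
qed

theorem mainTheorem13:
  fixes H :: "'d set" and al sg :: "'d \<Rightarrow> 'd" and k :: nat
    and a :: "'d set \<Rightarrow> 'd set \<Rightarrow> int" and S :: "'d set set" and r1 r2 :: "'d set"
  assumes "knot_diagram H al sg"
    and "reduced H al sg"
    and "2 \<le> k"
    and "game_version H al sg k a"
    and "checkerboard H al sg S"
    and "r1 \<in> regions H al sg" and "r1 \<in> S"
    and "r2 \<in> regions H al sg" and "r2 \<notin> S"
  shows "((\<exists>t::nat. t \<ge> 1 \<and> k = 2 ^ t) \<longrightarrow> unique_solving_fixing H al sg k a r1 r2) \<and>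
         ((\<forall>t::nat. k \<noteq> 2 ^ t) \<longrightarrow>
            dual_dist H al sg r1 r2 < (LEAST p::nat. prime p \<and> odd p \<and> p dvd k) \<longrightarrow>
            unique_solving_fixing H al sg k a r1 r2)"
proof -
  interpret reduced_knot_diagram H al sg using assms(1,2) by unfold_locales
  have solvable: "unique_solving_fixing H al sg k a r1 r2"
    if "\<forall>m. odd m \<longrightarrow> m \<le> dual_dist H al sg r1 r2 \<longrightarrow> coprime m k"
    using assms(3) unique_solving_fixing_if_odd_coprime[OF _ assms(4-9) that] by simp
  show ?thesis
  proof (intro conjI impI)
    assume "\<exists>t::nat. t \<ge> 1 \<and> k = 2 ^ t"
    then obtain t where "k = 2 ^ t" by blast
    then show "unique_solving_fixing H al sg k a r1 r2" by (intro solvable) simp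
  next
    assume less: "dual_dist H al sg r1 r2 < (LEAST p::nat. prime p \<and> odd p \<and> p dvd k)"
    show "unique_solving_fixing H al sg k a r1 r2"
    proof (rule solvable, intro allI impI)
      fix m assume "odd m" "m \<le> dual_dist H al sg r1 r2"
      with less show "coprime m k" by (intro coprime_if_less_least_odd_prime_dvd) simp_all
    qed
  qed
qed

end
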